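(* Let $(L_*,b)$ and $(M_*,b)$ be chain complexes, $i:(L_*,b)\to(M_*,b)$ and $p:(M_*,b)\to(L_*,b)$ chain maps, and $h$ a map of degree $+1$ on $M_*$ with $ip=1+bh+hb$. Let $\delta$ be a small perturbation, put $A=(1-\delta h)^{-1}\delta$, and define $$i_\infty=i+hAi,\quad p_\infty=p+pAh,\quad b_\infty=b+pAi.$$ Then $$b_\infty(p_\infty i-1)=(p_\infty i-1)b\qquad\text{and}\qquad (p i_\infty-1)b_\infty=b(p i_\infty-1).$$ That is, $p_\infty i-1:(L_*,b)\to(L_*,b_\infty)$ and $p i_\infty-1:(L_*,b_\infty)\to(L_*,b)$ are chain maps.
   Context: Complexes are chain complexes of modules over a ring, with differentials of degree $-1$. The data $i,p,h$ above is called a homotopy retract (HR) datum. A perturbation $\delta$ is a graded map $M_*\to M_*$ of the same degree as $b$ such that $(b+\delta)^2=0$. It is called small if $1-\delta h$ is invertible. It is known (homological perturbation lemma, HR version) that for a small perturbation, $(L_*,b_\infty)$ is a complex, that $i_\infty:(L_*,b_\infty)\to(M_*,b+\delta)$ and $p_\infty:(M_*,b+\delta)\to(L_*,b_\infty)$ are chain maps, and that $i_\infty p_\infty=1+(b+\delta)h_\infty+h_\infty(b+\delta)$, where $h_\infty=h+hAh$. *)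

theory Defs
  imports Main
begin

text \<open>Graded modules over a ring R are modelled inside an ambient R-module
(element type 'm, scalar action s) as a family of submodules M n, n :: int.
Equalities of graded maps are equalities on the carriers.\<close>

definition is_module :: "('r::ring_1 \<Rightarrow> 'm::ab_group_add \<Rightarrow> 'm) \<Rightarrow> bool" where
  "is_module s \<longleftrightarrow>
     (\<forall>a x y. s a (x + y) = s a x + s a y) \<and>
     (\<forall>a b x. s (a + b) x = s a x + s b x) \<and>
     (\<forall>a b x. s a (s b x) = s (a * b) x) \<and>
     (\<forall>x. s 1 x = x)"

definition graded_module :: "('r::ring_1 \<Rightarrow> 'm::ab_group_add \<Rightarrow> 'm) \<Rightarrow> (int \<Rightarrow> 'm set) \<Rightarrow> bool" where
  "graded_module s M \<longleftrightarrow> is_module s \<and>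
     (\<forall>n. 0 \<in> M n \<and> (\<forall>x\<in>M n. \<forall>y\<in>M n. x + y \<in> M n) \<and> (\<forall>a. \<forall>x\<in>M n. s a x \<in> M n))"

definition graded_map ::
  "('r::ring_1 \<Rightarrow> 'a::ab_group_add \<Rightarrow> 'a) \<Rightarrow> (int \<Rightarrow> 'a set) \<Rightarrow>
   ('r \<Rightarrow> 'b::ab_group_add \<Rightarrow> 'b) \<Rightarrow> (int \<Rightarrow> 'b set) \<Rightarrow> int \<Rightarrow> (int \<Rightarrow> 'a \<Rightarrow> 'b) \<Rightarrow> bool" where
  "graded_map s M s' M' d f \<longleftrightarrow>
     (\<forall>n. (\<forall>x\<in>M n. f n x \<in> M' (n + d)) \<and>
          (\<forall>x\<in>M n. \<forall>y\<in>M n. f n (x + y) = f n x + f n y) \<and>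
          (\<forall>a. \<forall>x\<in>M n. f n (s a x) = s' a (f n x)))"

definition chain_complex :: "('r::ring_1 \<Rightarrow> 'm::ab_group_add \<Rightarrow> 'm) \<Rightarrow> (int \<Rightarrow> 'm set) \<Rightarrow> (int \<Rightarrow> 'm \<Rightarrow> 'm) \<Rightarrow> bool" where
  "chain_complex s M b \<longleftrightarrow> graded_module s M \<and> graded_map s M s M (-1) b \<and>
     (\<forall>n. \<forall>x\<in>M n. b (n - 1) (b n x) = 0)"

definition chain_map ::
  "('r::ring_1 \<Rightarrow> 'a::ab_group_add \<Rightarrow> 'a) \<Rightarrow> (int \<Rightarrow> 'a set) \<Rightarrow> (int \<Rightarrow> 'a \<Rightarrow> 'a) \<Rightarrow>
   ('r \<Rightarrow> 'b::ab_group_add \<Rightarrow> 'b) \<Rightarrow> (int \<Rightarrow> 'b set) \<Rightarrow> (int \<Rightarrow> 'b \<Rightarrow> 'b) \<Rightarrow> (int \<Rightarrow> 'a \<Rightarrow> 'b) \<Rightarrow> bool" where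
  "chain_map s L bL s' M bM f \<longleftrightarrow> graded_map s L s' M 0 f \<and>
     (\<forall>n. \<forall>x\<in>L n. f (n - 1) (bL n x) = bM n (f n x))"

definition hr_datum ::
  "('r::ring_1 \<Rightarrow> 'l::ab_group_add \<Rightarrow> 'l) \<Rightarrow> (int \<Rightarrow> 'l set) \<Rightarrow> (int \<Rightarrow> 'l \<Rightarrow> 'l) \<Rightarrow>
   ('r \<Rightarrow> 'm::ab_group_add \<Rightarrow> 'm) \<Rightarrow> (int \<Rightarrow> 'm set) \<Rightarrow> (int \<Rightarrow> 'm \<Rightarrow> 'm) \<Rightarrow>
   (int \<Rightarrow> 'l \<Rightarrow> 'm) \<Rightarrow> (int \<Rightarrow> 'm \<Rightarrow> 'l) \<Rightarrow> (int \<Rightarrow> 'm \<Rightarrow> 'm) \<Rightarrow> bool" where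
  "hr_datum sL L bL sM M bM i p h \<longleftrightarrow>
     chain_complex sL L bL \<and> chain_complex sM M bM \<and>
     chain_map sL L bL sM M bM i \<and> chain_map sM M bM sL L bL p \<and>
     graded_map sM M sM M 1 h \<and>
     (\<forall>n. \<forall>y\<in>M n. i n (p n y) = y + bM (n + 1) (h n y) + h (n - 1) (bM n y))"

definition perturbation ::
  "('r::ring_1 \<Rightarrow> 'm::ab_group_add \<Rightarrow> 'm) \<Rightarrow> (int \<Rightarrow> 'm set) \<Rightarrow> (int \<Rightarrow> 'm \<Rightarrow> 'm) \<Rightarrow> (int \<Rightarrow> 'm \<Rightarrow> 'm) \<Rightarrow> bool" where
  "perturbation s M b \<delta> \<longleftrightarrow> graded_map s M s M (-1) \<delta> \<and>
     (\<forall>n. \<forall>x\<in>M n. (b (n - 1) (b n x + \<delta> n x) + \<delta> (n - 1) (b n x + \<delta> n x)) = 0)"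

definition inverse_one_minus ::
  "('r::ring_1 \<Rightarrow> 'm::ab_group_add \<Rightarrow> 'm) \<Rightarrow> (int \<Rightarrow> 'm set) \<Rightarrow> (int \<Rightarrow> 'm \<Rightarrow> 'm) \<Rightarrow> (int \<Rightarrow> 'm \<Rightarrow> 'm) \<Rightarrow> (int \<Rightarrow> 'm \<Rightarrow> 'm) \<Rightarrow> bool" where
  "inverse_one_minus s M \<delta> h g \<longleftrightarrow> graded_map s M s M 0 g \<and>
     (\<forall>n. \<forall>x\<in>M n. g n (x - \<delta> (n + 1) (h n x)) = x \<and> g n x - \<delta> (n + 1) (h n (g n x)) = x)"

definition small_perturbation ::
  "('r::ring_1 \<Rightarrow> 'm::ab_group_add \<Rightarrow> 'm) \<Rightarrow> (int \<Rightarrow> 'm set) \<Rightarrow> (int \<Rightarrow> 'm \<Rightarrow> 'm) \<Rightarrow> (int \<Rightarrow> 'm \<Rightarrow> 'm) \<Rightarrow> (int \<Rightarrow> 'm \<Rightarrow> 'm) \<Rightarrow> bool" where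
  "small_perturbation s M b h \<delta> \<longleftrightarrow> perturbation s M b \<delta> \<and> (\<exists>g. inverse_one_minus s M \<delta> h g)"

text \<open>A = (1 - delta h)^{-1} delta, of degree -1, given the inverse g.\<close>
definition pertA :: "(int \<Rightarrow> 'm \<Rightarrow> 'm) \<Rightarrow> (int \<Rightarrow> 'm \<Rightarrow> 'm) \<Rightarrow> int \<Rightarrow> 'm \<Rightarrow> 'm" where
  "pertA g \<delta> n x = g (n - 1) (\<delta> n x)"

definition i_inf :: "(int \<Rightarrow> 'l \<Rightarrow> 'm::ab_group_add) \<Rightarrow> (int \<Rightarrow> 'm \<Rightarrow> 'm) \<Rightarrow> (int \<Rightarrow> 'm \<Rightarrow> 'm) \<Rightarrow> (int \<Rightarrow> 'm \<Rightarrow> 'm) \<Rightarrow> int \<Rightarrow> 'l \<Rightarrow> 'm" where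
  "i_inf i h g \<delta> n x = i n x + h (n - 1) (pertA g \<delta> n (i n x))"

definition p_inf :: "(int \<Rightarrow> 'm \<Rightarrow> 'l::ab_group_add) \<Rightarrow> (int \<Rightarrow> 'm \<Rightarrow> 'm) \<Rightarrow> (int \<Rightarrow> 'm \<Rightarrow> 'm) \<Rightarrow> (int \<Rightarrow> 'm \<Rightarrow> 'm) \<Rightarrow> int \<Rightarrow> 'm \<Rightarrow> 'l" where
  "p_inf p h g \<delta> n y = p n y + p n (pertA g \<delta> (n + 1) (h n y))"

definition b_inf :: "(int \<Rightarrow> 'l::ab_group_add \<Rightarrow> 'l) \<Rightarrow> (int \<Rightarrow> 'l \<Rightarrow> 'm) \<Rightarrow> (int \<Rightarrow> 'm \<Rightarrow> 'l) \<Rightarrow> (int \<Rightarrow> 'm \<Rightarrow> 'm) \<Rightarrow> (int \<Rightarrow> 'm \<Rightarrow> 'm) \<Rightarrow> int \<Rightarrow> 'l \<Rightarrow> 'l" where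
  "b_inf bL i p g \<delta> n x = bL n x + p (n - 1) (pertA g \<delta> n (i n x))"

end

theory Submission
  imports Defs
begin

text \<open>Everything follows from one identity for A = (1 - \<delta>h)\<inverse>\<delta>, namely
  b A + A b + A i p A = 0, which holds because 1 - \<delta>h is injective and
  (1 - \<delta>h)(b A + A b + A i p A) = b \<delta> + \<delta> b + \<delta>\<delta> = 0 after substituting
  (1 - \<delta>h) A = \<delta>, A = \<delta>(1 + hA) and i p = 1 + b h + h b.
  Expanding the two claimed equations with the chain map properties of i and p, the
  terms A i p A are eliminated by this identity, and what remains is
  p A (i p - 1 - b h - h b) = 0, resp. p (i p - 1 - b h - h b) A = 0.\<close>

lemma graded_module_zero: "graded_module s M \<Longrightarrow> 0 \<in> M n"
  unfolding graded_module_def by blast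

lemma graded_module_add: "graded_module s M \<Longrightarrow> x \<in> M n \<Longrightarrow> y \<in> M n \<Longrightarrow> x + y \<in> M n"
  unfolding graded_module_def by blast

lemma module_scale_minus_one:
  assumes "is_module s" shows "s (-1) x = - x"
proof -
  have "s 0 x = 0"
    using assms unfolding is_module_def by (metis add.right_neutral add_cancel_right_right)
  moreover have "s (1 + -1) x = x + s (-1) x"
    using assms unfolding is_module_def by metis
  ultimately show ?thesis by (simp add: eq_neg_iff_add_eq_0 add.commute)
qed

lemma graded_module_uminus:
  assumes "graded_module s M" "x \<in> M n" shows "- x \<in> M n"
  using assms module_scale_minus_one[of s x] unfolding graded_module_def by metis

lemma graded_module_diff: "graded_module s M \<Longrightarrow> x \<in> M n \<Longrightarrow> y \<in> M n \<Longrightarrow> x - y \<in> M n"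
  by (metis diff_conv_add_uminus graded_module_add graded_module_uminus)

lemma graded_map_closed: "graded_map s M s' M' d f \<Longrightarrow> x \<in> M k \<Longrightarrow> m = k + d \<Longrightarrow> f k x \<in> M' m"
  unfolding graded_map_def by blast

lemma graded_map_add:
  "graded_map s M s' M' d f \<Longrightarrow> x \<in> M k \<Longrightarrow> y \<in> M k \<Longrightarrow> f k (x + y) = f k x + f k y"
  unfolding graded_map_def by blast

lemma graded_map_zero: "graded_map s M s' M' d f \<Longrightarrow> graded_module s M \<Longrightarrow> f k 0 = 0"
  using graded_map_add[of s M s' M' d f 0 k 0] graded_module_zero[of s M k] by simp

lemma graded_map_diff:
  "graded_map s M s' M' d f \<Longrightarrow> graded_module s M \<Longrightarrow> x \<in> M k \<Longrightarrow> y \<in> M k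
   \<Longrightarrow> f k (x - y) = f k x - f k y"
  using graded_map_add[of s M s' M' d f "x - y" k y] graded_module_diff[of s M x k y]
  by (simp add: eq_diff_eq)

lemma graded_map_comp:
  assumes "graded_map s M s' M' d f" "graded_map s' M' s'' M'' e f'"
  shows "graded_map s M s'' M'' (d + e) (\<lambda>n x. f' (n + d) (f n x))"
  using assms unfolding graded_map_def by (auto simp flip: add.assoc)

locale hr_perturbation =
  fixes sL :: "'r::ring_1 \<Rightarrow> 'l::ab_group_add \<Rightarrow> 'l" and L bL
    and sM :: "'r \<Rightarrow> 'm::ab_group_add \<Rightarrow> 'm" and M bM i p h \<delta> g
  assumes hr: "hr_datum sL L bL sM M bM i p h"
    and perturbation: "perturbation sM M bM \<delta>"
    and inverse: "inverse_one_minus sM M \<delta> h g"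
begin

abbreviation A :: "int \<Rightarrow> 'm \<Rightarrow> 'm" where
  "A \<equiv> pertA g \<delta>"

lemma L_graded: "graded_module sL L" and M_graded: "graded_module sM M"
  and bL_graded: "graded_map sL L sL L (-1) bL" and bM_graded: "graded_map sM M sM M (-1) bM"
  and i_graded: "graded_map sL L sM M 0 i" and p_graded: "graded_map sM M sL L 0 p"
  and h_graded: "graded_map sM M sM M 1 h"
  and \<delta>_graded: "graded_map sM M sM M (-1) \<delta>"
  and g_graded: "graded_map sM M sM M 0 g"
  using hr perturbation inverse
  unfolding hr_datum_def chain_complex_def chain_map_def perturbation_def inverse_one_minus_def
  by auto

lemma A_graded: "graded_map sM M sM M (-1) A"
proof -
  have "pertA g \<delta> = (\<lambda>n x. g (n + -1) (\<delta> n x))"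
    by (simp add: fun_eq_iff pertA_def)
  then show ?thesis
    using graded_map_comp[OF \<delta>_graded g_graded] by simp
qed

lemmas closed = graded_map_closed[OF bL_graded] graded_map_closed[OF bM_graded]
  graded_map_closed[OF i_graded] graded_map_closed[OF p_graded] graded_map_closed[OF h_graded]
  graded_map_closed[OF \<delta>_graded] graded_map_closed[OF A_graded]
  graded_module_add[OF L_graded] graded_module_diff[OF L_graded]
  graded_module_add[OF M_graded] graded_module_diff[OF M_graded]

lemmas additive =
  graded_map_add[OF bL_graded] graded_map_add[OF bM_graded] graded_map_add[OF i_graded]
  graded_map_add[OF p_graded] graded_map_add[OF h_graded] graded_map_add[OF \<delta>_graded]
  graded_map_add[OF A_graded]
  graded_map_diff[OF bL_graded L_graded] graded_map_diff[OF bM_graded M_graded]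
  graded_map_diff[OF i_graded L_graded] graded_map_diff[OF p_graded M_graded]
  graded_map_diff[OF h_graded M_graded] graded_map_diff[OF \<delta>_graded M_graded]
  graded_map_diff[OF A_graded M_graded]

lemma i_chain: "x \<in> L n \<Longrightarrow> i (n - 1) (bL n x) = bM n (i n x)"
  and p_chain: "y \<in> M n \<Longrightarrow> p (n - 1) (bM n y) = bL n (p n y)"
  and bM_square: "y \<in> M n \<Longrightarrow> bM (n - 1) (bM n y) = 0"
  and homotopy: "y \<in> M n \<Longrightarrow> i n (p n y) = y + bM (n + 1) (h n y) + h (n - 1) (bM n y)"
  using hr unfolding hr_datum_def chain_map_def chain_complex_def by auto

lemma perturbation_square:
  assumes "y \<in> M n"
  shows "bM (n - 1) (\<delta> n y) + \<delta> (n - 1) (bM n y) + \<delta> (n - 1) (\<delta> n y) = 0"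
proof -
  have "bM (n - 1) (bM n y + \<delta> n y) + \<delta> (n - 1) (bM n y + \<delta> n y) = 0"
    using perturbation assms unfolding perturbation_def by blast
  then show ?thesis
    using assms bM_square[OF assms] by (simp add: closed additive algebra_simps)
qed

lemma one_minus_delta_h_A:
  "y \<in> M n \<Longrightarrow> A n y - \<delta> n (h (n - 1) (A n y)) = \<delta> n y"
  using inverse graded_map_closed[OF \<delta>_graded]
  unfolding inverse_one_minus_def pertA_def by fastforce

lemma one_minus_delta_h_injective:
  assumes "z \<in> M n" "z - \<delta> (n + 1) (h n z) = 0"
  shows "z = 0"
  using inverse assms graded_map_zero[OF g_graded M_graded]
  unfolding inverse_one_minus_def by metis

lemma anticommutator_bM_A:
  assumes y: "y \<in> M n"
  shows "bM (n - 1) (A n y) + A (n - 1) (bM n y) + A (n - 1) (i (n - 1) (p (n - 1) (A n y))) = 0"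
    (is "?Z = 0")
proof (rule one_minus_delta_h_injective)
  define u where "u = A n y"
  define w where "w = y + h (n - 1) u"
  have u: "u \<in> M (n - 1)" and w: "w \<in> M n"
    unfolding u_def w_def using y by (simp_all add: closed)
  have \<delta>w: "\<delta> n w = u"
    using one_minus_delta_h_A[OF y] y u unfolding w_def u_def[symmetric]
    by (simp add: additive closed diff_eq_eq)
  show "?Z \<in> M (n - 1 - 1)" using y by (simp add: closed)
  have "?Z - \<delta> (n - 1 - 1 + 1) (h (n - 1 - 1) ?Z)
      = bM (n - 1) u - \<delta> (n - 1) (h (n - 1 - 1) (bM (n - 1) u))
        + \<delta> (n - 1) (bM n y) + \<delta> (n - 1) (i (n - 1) (p (n - 1) u))"
    using y u one_minus_delta_h_A[of "bM n y" "n - 1"]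
      one_minus_delta_h_A[of "i (n - 1) (p (n - 1) u)" "n - 1"]
    unfolding u_def[symmetric] by (simp add: closed additive algebra_simps)
  also have "\<dots> = bM (n - 1) u + \<delta> (n - 1) (bM n w) + \<delta> (n - 1) u"
    using y u w homotopy[OF u] unfolding w_def by (simp add: closed additive algebra_simps)
  also have "\<dots> = 0"
    using perturbation_square[OF w] unfolding \<delta>w by (simp add: algebra_simps)
  finally show "?Z - \<delta> (n - 1 - 1 + 1) (h (n - 1 - 1) ?Z) = 0" .
qed

lemma p_inf_i_minus_one_chain:
  assumes x: "x \<in> L n"
  shows "b_inf bL i p g \<delta> n (p_inf p h g \<delta> n (i n x) - x)
    = p_inf p h g \<delta> (n - 1) (i (n - 1) (bL n x)) - bL n x"
proof -
  define y where "y = i n x"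
  have y: "y \<in> M n" unfolding y_def using x by (simp add: closed)
  have p_anticommutator: "p (n - 1) (bM n (A (n + 1) (h n y)))
      + p (n - 1) (A n (bM (n + 1) (h n y))) + p (n - 1) (A n (i n (p n (A (n + 1) (h n y))))) = 0"
    using arg_cong[OF anticommutator_bM_A[of "h n y" "n + 1"], of "p (n - 1)"] y
      graded_map_zero[OF p_graded M_graded]
    by (simp add: closed additive)
  have "b_inf bL i p g \<delta> n (p_inf p h g \<delta> n (i n x) - x)
      = p (n - 1) (bM n y) + p (n - 1) (bM n (A (n + 1) (h n y))) - bL n x
        + p (n - 1) (A n (i n (p n y))) + p (n - 1) (A n (i n (p n (A (n + 1) (h n y)))))
        - p (n - 1) (A n y)"
    unfolding b_inf_def p_inf_def y_def[symmetric] using x y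
    by (simp add: closed additive p_chain[symmetric] y_def[symmetric] algebra_simps)
  also have "\<dots> = p (n - 1) (bM n y) - bL n x + p (n - 1) (A n (i n (p n y)))
        - p (n - 1) (A n y) - p (n - 1) (A n (bM (n + 1) (h n y)))"
    using p_anticommutator by (simp add: algebra_simps)
  also have "\<dots> = p (n - 1) (bM n y) + p (n - 1) (A n (h (n - 1) (bM n y))) - bL n x"
    using y homotopy[OF y] by (simp add: closed additive algebra_simps)
  also have "\<dots> = p_inf p h g \<delta> (n - 1) (i (n - 1) (bL n x)) - bL n x"
    unfolding p_inf_def y_def using x by (simp add: i_chain)
  finally show ?thesis .
qed

lemma p_i_inf_minus_one_chain:
  assumes x: "x \<in> L n"
  shows "p (n - 1) (i_inf i h g \<delta> (n - 1) (b_inf bL i p g \<delta> n x)) - b_inf bL i p g \<delta> n x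
    = bL n (p n (i_inf i h g \<delta> n x) - x)"
proof -
  define y where "y = i n x"
  define v where "v = A n y"
  have y: "y \<in> M n" and v: "v \<in> M (n - 1)"
    unfolding v_def y_def using x by (simp_all add: closed)
  have ph_anticommutator: "p (n - 1) (h (n - 1 - 1) (bM (n - 1) v))
      + p (n - 1) (h (n - 1 - 1) (A (n - 1) (bM n y)))
      + p (n - 1) (h (n - 1 - 1) (A (n - 1) (i (n - 1) (p (n - 1) v)))) = 0"
    using arg_cong[OF anticommutator_bM_A[OF y], of "\<lambda>z. p (n - 1) (h (n - 1 - 1) z)"] y v
      graded_map_zero[OF p_graded M_graded] graded_map_zero[OF h_graded M_graded]
    unfolding v_def[symmetric] by (simp add: closed additive)
  have "p (n - 1) (i_inf i h g \<delta> (n - 1) (b_inf bL i p g \<delta> n x)) - b_inf bL i p g \<delta> n x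
      = p (n - 1) (bM n y) + p (n - 1) (i (n - 1) (p (n - 1) v))
        + p (n - 1) (h (n - 1 - 1) (A (n - 1) (bM n y)))
        + p (n - 1) (h (n - 1 - 1) (A (n - 1) (i (n - 1) (p (n - 1) v))))
        - bL n x - p (n - 1) v"
    unfolding i_inf_def b_inf_def v_def[symmetric] y_def[symmetric] using x y v
    by (simp add: closed additive i_chain y_def[symmetric])
  also have "\<dots> = p (n - 1) (bM n y) + p (n - 1) (bM n (h (n - 1) v)) - bL n x"
    using ph_anticommutator v homotopy[OF v] by (simp add: closed additive algebra_simps)
  also have "\<dots> = bL n (p n (i_inf i h g \<delta> n x) - x)"
    unfolding i_inf_def y_def[symmetric] v_def[symmetric] using x y v
    by (simp add: closed additive p_chain)
  finally show ?thesis .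
qed

end

theorem lemma1p7:
  fixes sL :: "'r::ring_1 \<Rightarrow> 'l::ab_group_add \<Rightarrow> 'l"
    and sM :: "'r \<Rightarrow> 'm::ab_group_add \<Rightarrow> 'm"
    and L :: "int \<Rightarrow> 'l set" and M :: "int \<Rightarrow> 'm set"
    and bL :: "int \<Rightarrow> 'l \<Rightarrow> 'l" and bM :: "int \<Rightarrow> 'm \<Rightarrow> 'm"
    and i :: "int \<Rightarrow> 'l \<Rightarrow> 'm" and p :: "int \<Rightarrow> 'm \<Rightarrow> 'l"
    and h \<delta> g :: "int \<Rightarrow> 'm \<Rightarrow> 'm"
  assumes HR: "hr_datum sL L bL sM M bM i p h"
    and small: "small_perturbation sM M bM h \<delta>"
    and inv: "inverse_one_minus sM M \<delta> h g"
  shows "(\<forall>n. \<forall>x\<in>L n.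
           b_inf bL i p g \<delta> n (p_inf p h g \<delta> n (i n x) - x)
           = p_inf p h g \<delta> (n - 1) (i (n - 1) (bL n x)) - bL n x)
       \<and> (\<forall>n. \<forall>x\<in>L n.
           p (n - 1) (i_inf i h g \<delta> (n - 1) (b_inf bL i p g \<delta> n x)) - b_inf bL i p g \<delta> n x
           = bL n (p n (i_inf i h g \<delta> n x) - x))"
proof -
  interpret hr_perturbation sL L bL sM M bM i p h \<delta> g
    using HR small inv unfolding small_perturbation_def by unfold_locales auto
  show ?thesis
    using p_inf_i_minus_one_chain p_i_inf_minus_one_chain by blast
qed

end
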